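(* Let $n\ge1$, $0<\alpha\le 1$, let $\Omega\subset\mathbb{R}^n$ be a bounded domain, and let $f\in C(\Omega)$ be bounded with $f\le0$. Let $u$ be a bounded viscosity supersolution to $\mathcal{L}_\infty u=f$ in $\Omega$. Then for every $x\in\Omega$, $$\mathcal{L}^-_\infty u(x)=\inf_{y\in\mathbb{R}^n}\frac{u(y)-u(x)}{|x-y|^\alpha}=\inf_{y\in\mathbb{R}^n\setminus\Omega}\frac{u(y)-u(x)}{|y-x|^\alpha},$$ i.e. the infimum defining $\mathcal{L}^-_\infty u(x)$ equals the infimum taken only over the complement of $\Omega$.
   Context: For $0<\alpha\le1$ and a function $\varphi:\mathbb{R}^n\to\mathbb{R}$, the nonlocal infinity Laplacian is $\mathcal{L}_\infty\varphi(x)=\mathcal{L}^+_\infty\varphi(x)+\mathcal{L}^-_\infty\varphi(x)$, where $\mathcal{L}^+_\infty\varphi(x)=\sup_{y\in\mathbb{R}^n}\frac{\varphi(y)-\varphi(x)}{|x-y|^\alpha}$ and $\mathcal{L}^-_\infty\varphi(x)=\inf_{y\in\mathbb{R}^n}\frac{\varphi(y)-\varphi(x)}{|x-y|^\alpha}$ (with $y\neq x$). Viscosity supersolution: a lower semicontinuous $u:\mathbb{R}^n\to\mathbb{R}$ with $|u(x)|\le C(1+|x|)^\beta$ for some $C>0$, $\beta<\alpha$, is a viscosity supersolution to $\mathcal{L}_\infty u=f$ in $\Omega$ if for every $x_0\in\Omega$ and every locally Lipschitz continuous $\varphi:\mathbb{R}^n\to\mathbb{R}$ with $|\varphi(x)|\le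 C(1+|x|)^\beta$ for some $C>0$, $\beta<\alpha$, such that $\varphi(x_0)=u(x_0)$ and $u\ge\varphi$ on $\mathbb{R}^n$, one has $\mathcal{L}_\infty\varphi(x_0)\le f(x_0)$. *)

theory Defs
  imports "HOL-Analysis.Analysis"
begin

definition lsc :: "('a::topological_space \<Rightarrow> real) \<Rightarrow> bool" where
  "lsc u \<longleftrightarrow> (\<forall>x. \<forall>t. t < u x \<longrightarrow> eventually (\<lambda>y. t < u y) (at x))"

definition loc_lipschitz :: "('a::metric_space \<Rightarrow> real) \<Rightarrow> bool" where
  "loc_lipschitz \<phi> \<longleftrightarrow> (\<forall>x. \<exists>r>0. \<exists>L. L-lipschitz_on (ball x r) \<phi>)"

definition growth_ok :: "real \<Rightarrow> ('a::real_normed_vector \<Rightarrow> real) \<Rightarrow> bool" where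
  "growth_ok \<alpha> v \<longleftrightarrow> (\<exists>C>0. \<exists>\<beta><\<alpha>. \<forall>x. \<bar>v x\<bar> \<le> C * (1 + norm x) powr \<beta>)"

definition Lplus :: "real \<Rightarrow> ('a::real_normed_vector \<Rightarrow> real) \<Rightarrow> 'a \<Rightarrow> ereal" where
  "Lplus \<alpha> \<phi> x = (SUP y\<in>UNIV - {x}. ereal ((\<phi> y - \<phi> x) / norm (x - y) powr \<alpha>))"

definition Lminus :: "real \<Rightarrow> ('a::real_normed_vector \<Rightarrow> real) \<Rightarrow> 'a \<Rightarrow> ereal" where
  "Lminus \<alpha> \<phi> x = (INF y\<in>UNIV - {x}. ereal ((\<phi> y - \<phi> x) / norm (x - y) powr \<alpha>))"

definition Linf :: "real \<Rightarrow> ('a::real_normed_vector \<Rightarrow> real) \<Rightarrow> 'a \<Rightarrow> ereal" where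
  "Linf \<alpha> \<phi> x = Lplus \<alpha> \<phi> x + Lminus \<alpha> \<phi> x"

definition visc_super ::
  "real \<Rightarrow> 'a::real_normed_vector set \<Rightarrow> ('a \<Rightarrow> real) \<Rightarrow> ('a \<Rightarrow> real) \<Rightarrow> bool" where
  "visc_super \<alpha> \<Omega> f u \<longleftrightarrow> lsc u \<and> growth_ok \<alpha> u \<and>
     (\<forall>x0\<in>\<Omega>. \<forall>\<phi>. loc_lipschitz \<phi> \<and> growth_ok \<alpha> \<phi> \<and> \<phi> x0 = u x0 \<and> (\<forall>x. \<phi> x \<le> u x)
        \<longrightarrow> Linf \<alpha> \<phi> x0 \<le> ereal (f x0))"

end

theory Submission
  imports Defs
begin

text \<open>
  Fix \<open>x \<in> \<Omega>\<close> and let \<open>r \<le> 0\<close> be the infimum of the quotients over the complement of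
  \<open>\<Omega>\<close> (it is \<open>\<le> 0\<close> because \<open>u\<close> is bounded and \<open>\<Omega>\<close> is not). Then \<open>u\<close> lies above the
  cone \<open>u x + r |w - x|\<^sup>\<alpha>\<close> outside \<open>\<Omega>\<close>, and the claim is that it does so everywhere.
  Otherwise the lower semicontinuous function \<open>u - cone\<close> attains a negative minimum at some
  \<open>z \<in> \<Omega>\<close>, \<open>z \<noteq> x\<close>, and the cone shifted down to touch \<open>u\<close> at \<open>z\<close> (made Lipschitz near its
  vertex by a steep linear cone below \<open>u\<close>) is an admissible test function. Its nonlocal
  infinity Laplacian at \<open>z\<close> is positive: \<open>\<L>\<^sup>-\<close> is at least \<open>r\<close> by subadditivity of
  \<open>t \<mapsto> t\<^sup>\<alpha>\<close>, while \<open>\<L>\<^sup>+\<close> exceeds \<open>-r\<close> because the test function at the vertex lies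
  strictly above the shifted cone. This contradicts \<open>f \<le> 0\<close>.
\<close>

lemma lipschitz_on_max:
  fixes f g :: "'a::metric_space \<Rightarrow> real"
  assumes "L-lipschitz_on S f" "K-lipschitz_on S g"
  shows "(max L K)-lipschitz_on S (\<lambda>x. max (f x) (g x))"
proof (rule lipschitz_onI)
  show "0 \<le> max L K" using assms(1) lipschitz_on_nonneg by fastforce
  fix x y assume xy: "x \<in> S" "y \<in> S"
  have "\<bar>f x - f y\<bar> \<le> max L K * dist x y"
    using lipschitz_onD[OF assms(1) xy] by (simp add: dist_real_def mult_right_mono order_trans)
  moreover have "\<bar>g x - g y\<bar> \<le> max L K * dist x y"
    using lipschitz_onD[OF assms(2) xy] by (simp add: dist_real_def mult_right_mono order_trans)
  ultimately show "dist (max (f x) (g x)) (max (f y) (g y)) \<le> max L K * dist x y"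
    unfolding dist_real_def by (auto simp: max_def abs_if split: if_splits)
qed

lemma powr_add_le_add_powr:
  fixes a b \<alpha> :: real
  assumes "0 \<le> a" "0 \<le> b" "0 < \<alpha>" "\<alpha> \<le> 1"
  shows "(a + b) powr \<alpha> \<le> a powr \<alpha> + b powr \<alpha>"
proof (cases "a + b = 0")
  case True then show ?thesis using assms by simp
next
  case False
  then have s: "a + b > 0" using assms by simp
  have le_powr: "t \<le> t powr \<alpha>" if "0 \<le> t" "t \<le> 1" for t :: real
    by (metis assms(3,4) powr_mono' powr_one that)
  have "1 = a/(a+b) + b/(a+b)" using s by (simp add: add_divide_distrib[symmetric])
  also have "\<dots> \<le> (a/(a+b)) powr \<alpha> + (b/(a+b)) powr \<alpha>"
    using le_powr[of "a/(a+b)"] le_powr[of "b/(a+b)"] s assms by simp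
  also have "\<dots> = (a powr \<alpha> + b powr \<alpha>) / (a+b) powr \<alpha>"
    using assms s by (simp add: powr_divide add_divide_distrib)
  finally show ?thesis using s by (simp add: le_divide_eq)
qed

lemma abs_powr_diff_le:
  fixes a b c \<alpha> :: real
  assumes "0 < c" "c \<le> a" "c \<le> b" "0 < \<alpha>" "\<alpha> \<le> 1"
  shows "\<bar>a powr \<alpha> - b powr \<alpha>\<bar> \<le> \<alpha> * c powr (\<alpha> - 1) * \<bar>a - b\<bar>"
proof -
  have mvt: "t powr \<alpha> - s powr \<alpha> \<le> \<alpha> * c powr (\<alpha> - 1) * (t - s)" if "c \<le> s" "s < t" for s t
  proof -
    have "((\<lambda>t. t powr \<alpha>) has_real_derivative \<alpha> * v powr (\<alpha> - 1)) (at v)" if "s \<le> v" for v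
      using has_real_derivative_powr[of v \<alpha>] that \<open>c \<le> s\<close> assms(1) by simp
    then obtain \<xi> where \<xi>: "s < \<xi>" "t powr \<alpha> - s powr \<alpha> = (t - s) * (\<alpha> * \<xi> powr (\<alpha> - 1))"
      using MVT2[OF \<open>s < t\<close>, of "\<lambda>t. t powr \<alpha>" "\<lambda>v. \<alpha> * v powr (\<alpha> - 1)"] by auto
    have "\<xi> powr (\<alpha> - 1) \<le> c powr (\<alpha> - 1)"
      using powr_mono2'[of "\<alpha> - 1" c \<xi>] assms \<xi> that by auto
    then show ?thesis
      using \<xi> that assms by (simp add: mult_left_mono mult.commute mult.left_commute)
  qed
  show ?thesis
  proof (cases a b rule: linorder_cases)
    case less
    moreover have "a powr \<alpha> \<le> b powr \<alpha>" using less assms by (intro powr_mono2) auto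
    ultimately show ?thesis using mvt[of a b] assms by (simp add: abs_if algebra_simps)
  next
    case greater
    moreover have "b powr \<alpha> \<le> a powr \<alpha>" using greater assms by (intro powr_mono2) auto
    ultimately show ?thesis using mvt[of b a] assms by (simp add: abs_if algebra_simps)
  qed simp
qed

lemma lipschitz_on_norm_diff:
  fixes x :: "'a::real_normed_vector"
  shows "1-lipschitz_on S (\<lambda>w. norm (w - x))"
  by (rule lipschitz_onI) (auto simp: dist_norm intro: order_trans[OF norm_triangle_ineq3])

lemma lipschitz_on_norm_diff_powr:
  fixes x p :: "'a::real_normed_vector"
  defines "c \<equiv> norm (p - x) / 2"
  assumes "p \<noteq> x" "0 < \<alpha>" "\<alpha> \<le> 1"
  shows "(\<alpha> * c powr (\<alpha> - 1))-lipschitz_on (ball p c) (\<lambda>w. norm (w - x) powr \<alpha>)"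
proof (rule lipschitz_onI)
  have c: "0 < c" using assms by (simp add: c_def)
  then show "0 \<le> \<alpha> * c powr (\<alpha> - 1)" using assms by simp
  have far: "c \<le> norm (w - x)" if "w \<in> ball p c" for w
    using that norm_triangle_ineq[of "w - x" "p - w"] by (simp add: c_def dist_norm)
  fix a b assume ab: "a \<in> ball p c" "b \<in> ball p c"
  have "\<bar>norm (a - x) powr \<alpha> - norm (b - x) powr \<alpha>\<bar>
      \<le> \<alpha> * c powr (\<alpha> - 1) * \<bar>norm (a - x) - norm (b - x)\<bar>"
    using abs_powr_diff_le[OF c far[OF ab(1)] far[OF ab(2)] assms(3,4)] .
  also have "\<dots> \<le> \<alpha> * c powr (\<alpha> - 1) * dist a b"
    using norm_triangle_ineq3[of "a - x" "b - x"] assms(3)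
    by (intro mult_left_mono) (auto simp: dist_norm)
  finally show "dist (norm (a - x) powr \<alpha>) (norm (b - x) powr \<alpha>) \<le> \<alpha> * c powr (\<alpha> - 1) * dist a b"
    by (simp add: dist_real_def)
qed

lemma lsc_diff_continuous:
  fixes u h :: "'a::metric_space \<Rightarrow> real"
  assumes "lsc u" "continuous_on UNIV h"
  shows "lsc (\<lambda>y. u y - h y)"
  unfolding lsc_def
proof (intro allI impI)
  fix x t assume t: "t < u x - h x"
  define e where "e = (u x - h x - t) / 2"
  have e: "e > 0" using t by (simp add: e_def)
  have "eventually (\<lambda>y. u x - e < u y) (at x)"
    using assms(1) e unfolding lsc_def by simp
  moreover have "eventually (\<lambda>y. dist (h y) (h x) < e) (at x)"
    using assms(2) e by (intro tendstoD) (simp_all add: continuous_on_eq_continuous_at isCont_def)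
  ultimately show "eventually (\<lambda>y. t < u y - h y) (at x)"
  proof eventually_elim
    fix y assume "u x - e < u y" "dist (h y) (h x) < e"
    then show "t < u y - h y"
      using abs_ge_self[of "h y - h x"] unfolding e_def dist_real_def by (simp add: field_simps)
  qed
qed

lemma lsc_attains_min_on_compact:
  fixes g :: "'a::metric_space \<Rightarrow> real"
  assumes "compact K" "K \<noteq> {}" "lsc g"
  obtains z where "z \<in> K" "\<And>w. w \<in> K \<Longrightarrow> g z \<le> g w"
proof -
  have "\<exists>z\<in>K. \<forall>w\<in>K. g z \<le> g w"
  proof (rule ccontr)
    assume "\<not> ?thesis"
    then have "\<forall>z\<in>K. \<exists>w\<in>K. g w < g z" by (auto simp: not_le)
    then obtain W where W: "\<And>z. z \<in> K \<Longrightarrow> W z \<in> K \<and> g (W z) < g z"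
      by metis
    have "\<exists>S. open S \<and> z \<in> S \<and> (\<forall>y\<in>S. g (W z) < g y)" if z: "z \<in> K" for z
    proof -
      have "eventually (\<lambda>y. g (W z) < g y) (at z)"
        using assms(3) W[OF z] unfolding lsc_def by blast
      then obtain S where "open S" "z \<in> S" "\<forall>y\<in>S. y \<noteq> z \<longrightarrow> g (W z) < g y"
        unfolding eventually_at_topological by auto
      then show ?thesis using W[OF z] by (intro exI[of _ S]) auto
    qed
    then obtain Op where Op: "\<And>z. z \<in> K \<Longrightarrow> open (Op z) \<and> z \<in> Op z \<and> (\<forall>y\<in>Op z. g (W z) < g y)"
      by metis
    then have "K \<subseteq> (\<Union>c\<in>K. Op c)" "\<And>z. z \<in> K \<Longrightarrow> open (Op z)" by auto
    then obtain C where C: "C \<subseteq> K" "finite C" "K \<subseteq> (\<Union>c\<in>C. Op c)"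
      using compactE_image[OF assms(1), of K Op] by metis
    then have "C \<noteq> {}" using assms(2) by auto
    define m where "m = Min ((\<lambda>c. g (W c)) ` C)"
    obtain c0 where c0: "c0 \<in> C" "m = g (W c0)"
      using Min_in[of "(\<lambda>c. g (W c)) ` C"] C \<open>C \<noteq> {}\<close> unfolding m_def by fastforce
    then obtain c where c: "c \<in> C" "W c0 \<in> Op c" using C W by blast
    then have "g (W c) < m" using Op C c0 by auto
    moreover have "m \<le> g (W c)" using C c by (simp add: m_def)
    ultimately show False by simp
  qed
  then show ?thesis using that by blast
qed

lemma growth_ok_bounded:
  fixes v :: "'a::real_normed_vector \<Rightarrow> real"
  assumes "0 < \<alpha>" "\<And>w. \<bar>v w\<bar> \<le> B"
  shows "growth_ok \<alpha> v"
proof -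
  have "\<bar>v w\<bar> \<le> (\<bar>B\<bar> + 1) * (1 + norm w) powr 0" for w :: 'a
  proof -
    have "0 < 1 + norm w" by (simp add: add_pos_nonneg)
    then show ?thesis using assms(2)[of w] by simp
  qed
  then show ?thesis
    unfolding growth_ok_def using assms(1) by (intro exI[of _ "\<bar>B\<bar> + 1"] exI[of _ 0]) auto
qed

lemma loc_lipschitz_max_power_cone_linear_cone:
  fixes x :: "'a::real_normed_vector"
  assumes "0 < \<alpha>" "\<alpha> \<le> 1" "M \<le> 0" "0 < K" "a < c"
  shows "loc_lipschitz (\<lambda>w. max (max (a + M * norm (w - x) powr \<alpha>) (c - K * norm (w - x))) b)"
    (is "loc_lipschitz ?\<phi>")
  unfolding loc_lipschitz_def
proof
  fix p
  have cone: "K-lipschitz_on S (\<lambda>w. c - K * norm (w - x))" for S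
    using lipschitz_on_diff[OF lipschitz_on_constant
        lipschitz_on_cmult_real[OF lipschitz_on_norm_diff, of K]] assms(4) by simp
  show "\<exists>r>0. \<exists>L. L-lipschitz_on (ball p r) ?\<phi>"
  proof (cases "p = x")
    case True
    \<comment> \<open>near the vertex the power cone lies below the linear cone, so it drops out of the max\<close>
    have "?\<phi> w = max (c - K * norm (w - x)) b" if "w \<in> ball x ((c - a) / K)" for w
    proof -
      have "K * norm (w - x) < c - a"
        using that assms(4) by (simp add: dist_norm norm_minus_commute field_simps)
      moreover have "M * norm (w - x) powr \<alpha> \<le> 0" using assms(3) by (simp add: mult_nonpos_nonneg)
      ultimately show ?thesis by simp
    qed
    moreover have "(max K 0)-lipschitz_on (ball x ((c - a) / K)) (\<lambda>w. max (c - K * norm (w - x)) b)"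
      by (intro lipschitz_on_max cone lipschitz_on_constant)
    ultimately have "(max K 0)-lipschitz_on (ball x ((c - a) / K)) ?\<phi>"
      by (rule lipschitz_on_transform[rotated])
    moreover have "0 < (c - a) / K" using assms(4,5) by simp
    ultimately show ?thesis using True by blast
  next
    case False
    define r where "r = norm (p - x) / 2"
    have "(\<bar>M\<bar> * (\<alpha> * r powr (\<alpha> - 1)))-lipschitz_on (ball p r) (\<lambda>w. a + M * norm (w - x) powr \<alpha>)"
      using lipschitz_on_add[OF lipschitz_on_constant[of _ a] lipschitz_on_cmult_real[OF
          lipschitz_on_norm_diff_powr[OF False assms(1,2)], of M]]
      by (simp add: r_def)
    then have "(max (max (\<bar>M\<bar> * (\<alpha> * r powr (\<alpha> - 1))) K) 0)-lipschitz_on (ball p r) ?\<phi>"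
      by (intro lipschitz_on_max cone lipschitz_on_constant)
    moreover have "0 < r" using False by (simp add: r_def)
    ultimately show ?thesis by blast
  qed
qed

lemma lsc_linear_cone_below:
  fixes u :: "'a::real_normed_vector \<Rightarrow> real"
  assumes "lsc u" "\<And>w. \<bar>u w\<bar> \<le> B" "0 < \<delta>"
  obtains K where "0 < K" "\<And>w. u x - \<delta> - K * norm (w - x) \<le> u w"
proof -
  have "eventually (\<lambda>w. u x - \<delta> < u w) (at x)"
    using assms(1,3) unfolding lsc_def by simp
  then obtain \<rho> where \<rho>: "0 < \<rho>" "\<And>w. w \<noteq> x \<Longrightarrow> dist w x < \<rho> \<Longrightarrow> u x - \<delta> < u w"
    unfolding eventually_at by blast
  define K where "K = (2 * B + 1) / \<rho>"
  have B: "0 \<le> B" "\<bar>u x\<bar> \<le> B" using assms(2)[of x] by auto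
  then have "0 < K" using \<rho>(1) by (simp add: K_def)
  moreover have "u x - \<delta> - K * norm (w - x) \<le> u w" for w
  proof (cases "dist w x < \<rho>")
    case True
    have "0 \<le> K * norm (w - x)" using \<open>0 < K\<close> by simp
    then show ?thesis using True \<rho>(2)[of w] assms(3) by (cases "w = x") auto
  next
    case False
    then have "(2 * B + 1) * \<rho> \<le> (2 * B + 1) * norm (w - x)"
      using B(1) by (intro mult_left_mono) (auto simp: dist_norm)
    then have "2 * B + 1 \<le> K * norm (w - x)"
      using \<rho>(1) by (simp add: K_def field_simps)
    then show ?thesis using B assms(2)[of w] assms(3) by (auto simp: abs_le_iff)
  qed
  ultimately show ?thesis using that by blast
qed

lemma touching_power_cone_test_function:
  fixes u :: "'a::real_normed_vector \<Rightarrow> real"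
  assumes "lsc u" "\<And>w. \<bar>u w\<bar> \<le> B" "0 < \<alpha>" "\<alpha> \<le> 1" "M \<le> 0" "0 < \<delta>"
    and below: "\<And>w. u x - \<delta> + M * norm (w - x) powr \<alpha> \<le> u w"
  obtains \<phi> where "loc_lipschitz \<phi>" "growth_ok \<alpha> \<phi>" "\<And>w. \<phi> w \<le> u w"
    "\<And>w. u x - \<delta> + M * norm (w - x) powr \<alpha> \<le> \<phi> w" "u x - \<delta> / 2 \<le> \<phi> x"
proof -
  obtain K where K: "0 < K" "\<And>w. u x - \<delta> / 2 - K * norm (w - x) \<le> u w"
    using lsc_linear_cone_below[OF assms(1,2), of "\<delta> / 2"] assms(6) by auto
  define \<phi> where "\<phi> w = max (max (u x - \<delta> + M * norm (w - x) powr \<alpha>)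
    (u x - \<delta> / 2 - K * norm (w - x))) (- B)" for w
  have "loc_lipschitz \<phi>"
    unfolding \<phi>_def using assms(3-6) K(1)
    by (intro loc_lipschitz_max_power_cone_linear_cone) auto
  moreover have le_u: "\<phi> w \<le> u w" for w
    using below[of w] K(2)[of w] assms(2)[of w] by (auto simp: \<phi>_def abs_le_iff)
  moreover have "\<bar>\<phi> w\<bar> \<le> B" for w
    using le_u[of w] assms(2)[of w] by (auto simp: \<phi>_def abs_le_iff)
  then have "growth_ok \<alpha> \<phi>" using growth_ok_bounded assms(3) by blast
  moreover have "u x - \<delta> + M * norm (w - x) powr \<alpha> \<le> \<phi> w" for w
    by (simp add: \<phi>_def)
  moreover have "u x - \<delta> / 2 \<le> \<phi> x" by (simp add: \<phi>_def)
  ultimately show ?thesis using that by blast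
qed

lemma Lminus_ge_at_touching_power_cone:
  fixes \<phi> :: "'a::real_normed_vector \<Rightarrow> real"
  assumes "0 < \<alpha>" "\<alpha> \<le> 1" "M \<le> 0"
    and above: "\<And>w. c + M * norm (w - x) powr \<alpha> \<le> \<phi> w"
    and touch: "\<phi> z = c + M * norm (z - x) powr \<alpha>"
  shows "ereal M \<le> Lminus \<alpha> \<phi> z"
  unfolding Lminus_def
proof (rule INF_greatest)
  fix w assume "w \<in> UNIV - {z}"
  then have pos: "0 < norm (z - w) powr \<alpha>" by simp
  have "norm (w - x) \<le> norm (z - x) + norm (z - w)"
    using norm_triangle_ineq[of "z - x" "w - z"] by (simp add: norm_minus_commute)
  then have "norm (w - x) powr \<alpha> \<le> (norm (z - x) + norm (z - w)) powr \<alpha>"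
    using assms(1) by (intro powr_mono2) auto
  also have "\<dots> \<le> norm (z - x) powr \<alpha> + norm (z - w) powr \<alpha>"
    using assms(1,2) by (intro powr_add_le_add_powr) auto
  finally have "M * norm (z - w) powr \<alpha> \<le> M * (norm (w - x) powr \<alpha> - norm (z - x) powr \<alpha>)"
    using assms(3) by (intro mult_left_mono_neg) auto
  also have "\<dots> \<le> \<phi> w - \<phi> z"
    using above[of w] touch by (simp add: algebra_simps)
  finally show "ereal M \<le> ereal ((\<phi> w - \<phi> z) / norm (z - w) powr \<alpha>)"
    using pos by (simp add: le_divide_eq)
qed

lemma Linf_ge_at_touching_power_cone:
  fixes \<phi> :: "'a::real_normed_vector \<Rightarrow> real"
  assumes "0 < \<alpha>" "\<alpha> \<le> 1" "M \<le> 0"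
    and above: "\<And>w. c + M * norm (w - x) powr \<alpha> \<le> \<phi> w"
    and touch: "\<phi> z = c + M * norm (z - x) powr \<alpha>"
    and "z \<noteq> x" "c + \<eta> \<le> \<phi> x"
  shows "ereal (\<eta> / norm (z - x) powr \<alpha>) \<le> Linf \<alpha> \<phi> z"
proof -
  define n where "n = norm (z - x) powr \<alpha>"
  have "0 < n" using \<open>z \<noteq> x\<close> by (simp add: n_def)
  have "\<eta> - M * n \<le> \<phi> x - \<phi> z" using assms(7) touch by (simp add: n_def)
  then have "\<eta> / n - M \<le> (\<phi> x - \<phi> z) / n"
    using \<open>0 < n\<close> divide_right_mono[of "\<eta> - M * n" "\<phi> x - \<phi> z" n] by (simp add: diff_divide_distrib)
  also have "ereal \<dots> \<le> Lplus \<alpha> \<phi> z"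
    unfolding Lplus_def n_def by (rule SUP_upper) (use assms(6) in auto)
  finally have "ereal (\<eta> / n - M) + ereal M \<le> Lplus \<alpha> \<phi> z + Lminus \<alpha> \<phi> z"
    using Lminus_ge_at_touching_power_cone[OF assms(1-5)] by (intro add_mono) auto
  then show ?thesis by (simp add: Linf_def n_def)
qed

lemma lsc_attains_negative_min:
  fixes g :: "'a::heine_borel \<Rightarrow> real"
  assumes "lsc g" "bounded \<Omega>" "\<And>w. w \<notin> \<Omega> \<Longrightarrow> 0 \<le> g w" "g y < 0"
  obtains z where "z \<in> \<Omega>" "g z < 0" "\<And>w. g z \<le> g w"
proof -
  have "y \<in> \<Omega>" using assms(3,4) by (meson not_le)
  then obtain z where z: "z \<in> closure \<Omega>" "\<And>w. w \<in> closure \<Omega> \<Longrightarrow> g z \<le> g w"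
    using lsc_attains_min_on_compact[OF _ _ assms(1)] assms(2) compact_closure by blast
  have "g z < 0" using z(2)[of y] assms(4) \<open>y \<in> \<Omega>\<close> closure_subset by force
  moreover have "g z \<le> g w" for w
  proof (cases "w \<in> closure \<Omega>")
    case False
    then have "w \<notin> \<Omega>" using closure_subset by blast
    then show ?thesis using assms(3) \<open>g z < 0\<close> by force
  qed (use z in blast)
  moreover have "z \<in> \<Omega>" using assms(3) \<open>g z < 0\<close> by (meson not_le)
  ultimately show ?thesis using that by blast
qed

lemma visc_super_above_power_cone:
  fixes u f :: "'a::euclidean_space \<Rightarrow> real"
  assumes "visc_super \<alpha> \<Omega> f u" "0 < \<alpha>" "\<alpha> \<le> 1" "bounded \<Omega>" "\<And>z. z \<in> \<Omega> \<Longrightarrow> f z \<le> 0"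
    and "bounded (range u)" "x \<in> \<Omega>" "M \<le> 0"
    and outside: "\<And>w. w \<notin> \<Omega> \<Longrightarrow> M * norm (w - x) powr \<alpha> \<le> u w - u x"
  shows "M * norm (y - x) powr \<alpha> \<le> u y - u x"
proof (rule ccontr)
  have lsc: "lsc u" and test: "\<And>z \<phi>. z \<in> \<Omega> \<Longrightarrow> loc_lipschitz \<phi> \<Longrightarrow> growth_ok \<alpha> \<phi> \<Longrightarrow>
      \<phi> z = u z \<Longrightarrow> (\<And>w. \<phi> w \<le> u w) \<Longrightarrow> Linf \<alpha> \<phi> z \<le> ereal (f z)"
    using assms(1) unfolding visc_super_def by blast+
  obtain B where B: "\<And>w. \<bar>u w\<bar> \<le> B" using assms(6) unfolding bounded_real by blast
  define g where "g w = u w - (u x + M * norm (w - x) powr \<alpha>)" for w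
  have "lsc g"
    unfolding g_def using lsc assms(2)
    by (intro lsc_diff_continuous continuous_intros continuous_on_powr') auto
  moreover assume "\<not> M * norm (y - x) powr \<alpha> \<le> u y - u x"
  then have "g y < 0" by (simp add: g_def)
  moreover have "0 \<le> g w" if "w \<notin> \<Omega>" for w using outside[OF that] by (simp add: g_def)
  ultimately obtain z where z: "z \<in> \<Omega>" "g z < 0" "\<And>w. g z \<le> g w"
    using lsc_attains_negative_min assms(4) by metis
  define \<delta> where "\<delta> = - g z"
  have "0 < \<delta>" using z(2) by (simp add: \<delta>_def)
  moreover have "u x - \<delta> + M * norm (w - x) powr \<alpha> \<le> u w" for w
    using z(3)[of w] by (simp add: \<delta>_def g_def)
  ultimately obtain \<phi> where \<phi>: "loc_lipschitz \<phi>" "growth_ok \<alpha> \<phi>" "\<And>w. \<phi> w \<le> u w"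
      "\<And>w. u x - \<delta> + M * norm (w - x) powr \<alpha> \<le> \<phi> w" "u x - \<delta> / 2 \<le> \<phi> x"
    using touching_power_cone_test_function[OF lsc B assms(2,3,8)] by blast
  have touch: "\<phi> z = u x - \<delta> + M * norm (z - x) powr \<alpha>"
    using \<phi>(3,4)[of z] by (simp add: \<delta>_def g_def)
  have "z \<noteq> x" using z(2) assms(2) by (auto simp: g_def)
  define n where "n = norm (z - x) powr \<alpha>"
  have "ereal (\<delta> / 2 / n) \<le> Linf \<alpha> \<phi> z"
    unfolding n_def using \<phi>(5) \<open>z \<noteq> x\<close>
    by (intro Linf_ge_at_touching_power_cone[OF assms(2,3,8) \<phi>(4) touch]) auto
  also have "\<dots> \<le> ereal (f z)"
    using test[OF z(1) \<phi>(1,2) _ \<phi>(3)] \<phi>(3)[of z] touch by (simp add: \<delta>_def g_def)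
  finally have "\<delta> / 2 / n \<le> f z" by simp
  moreover have "0 < \<delta> / 2 / n" using \<open>0 < \<delta>\<close> \<open>z \<noteq> x\<close> by (simp add: n_def)
  ultimately show False using assms(5)[OF z(1)] by linarith
qed

lemma INF_quotient_complement_nonpos:
  fixes u :: "'a::euclidean_space \<Rightarrow> real"
  assumes "0 < \<alpha>" "bounded \<Omega>" "bounded (range u)"
  shows "(INF y\<in>UNIV - \<Omega>. ereal ((u y - u x) / norm (y - x) powr \<alpha>)) \<le> 0"
proof (rule ereal_le_epsilon2)
  fix \<epsilon> :: real assume "0 < \<epsilon>"
  obtain B where B: "\<And>w. \<bar>u w\<bar> \<le> B" using assms(3) unfolding bounded_real by blast
  obtain b where b: "\<And>w. w \<in> \<Omega> \<Longrightarrow> norm w \<le> b" using assms(2) unfolding bounded_iff by blast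
  obtain e :: 'a where e: "e \<in> Basis" using nonempty_Basis by blast
  define T where "T = max (norm x + \<bar>b\<bar> + 1) ((2 * B / \<epsilon>) powr (1 / \<alpha>))"
  define y where "y = x + T *\<^sub>R e"
  have "0 < T" by (simp add: T_def max.strict_coboundedI1 add_nonneg_pos)
  then have ny: "norm (y - x) = T" using e by (simp add: y_def)
  have "T \<le> norm y + norm x"
    using norm_triangle_ineq4[of y x] ny by simp
  then have "\<bar>b\<bar> < norm y" by (simp add: T_def)
  then have "y \<notin> \<Omega>" using b[of y] by linarith
  have "2 * B / \<epsilon> \<le> T powr \<alpha>"
  proof -
    have "0 \<le> B" using B[of x] by simp
    then have "2 * B / \<epsilon> = ((2 * B / \<epsilon>) powr (1 / \<alpha>)) powr \<alpha>"
      using assms(1) \<open>0 < \<epsilon>\<close> by (simp add: powr_powr)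
    also have "\<dots> \<le> T powr \<alpha>" using assms(1) by (intro powr_mono2) (auto simp: T_def)
    finally show ?thesis .
  qed
  then have "u y - u x \<le> \<epsilon> * norm (y - x) powr \<alpha>"
    using B[of x] B[of y] \<open>0 < \<epsilon>\<close> ny by (simp add: field_simps abs_le_iff)
  then have "(u y - u x) / norm (y - x) powr \<alpha> \<le> \<epsilon>"
    using \<open>0 < T\<close> ny by (simp add: divide_le_eq mult.commute)
  moreover have "(INF y\<in>UNIV - \<Omega>. ereal ((u y - u x) / norm (y - x) powr \<alpha>))
      \<le> ereal ((u y - u x) / norm (y - x) powr \<alpha>)"
    using \<open>y \<notin> \<Omega>\<close> by (intro INF_lower) simp
  ultimately show "(INF y\<in>UNIV - \<Omega>. ereal ((u y - u x) / norm (y - x) powr \<alpha>)) \<le> 0 + ereal \<epsilon>"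
    by (simp add: order_trans)
qed

lemma Lminus_le_INF_complement:
  assumes "x \<in> \<Omega>"
  shows "Lminus \<alpha> u x \<le> (INF y\<in>UNIV - \<Omega>. ereal ((u y - u x) / norm (y - x) powr \<alpha>))"
  unfolding Lminus_def
  by (rule INF_superset_mono) (use assms in \<open>auto simp: norm_minus_commute\<close>)

lemma INF_complement_le_Lminus:
  fixes u f :: "'a::euclidean_space \<Rightarrow> real"
  assumes "visc_super \<alpha> \<Omega> f u" "0 < \<alpha>" "\<alpha> \<le> 1" "bounded \<Omega>" "\<And>z. z \<in> \<Omega> \<Longrightarrow> f z \<le> 0"
    and "bounded (range u)" "x \<in> \<Omega>"
  shows "(INF y\<in>UNIV - \<Omega>. ereal ((u y - u x) / norm (y - x) powr \<alpha>)) \<le> Lminus \<alpha> u x"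
    (is "?R \<le> _")
proof (cases ?R)
  case (real r)
  have "r \<le> 0" using INF_quotient_complement_nonpos[OF assms(2,4,6), of x] real by simp
  have "r * norm (w - x) powr \<alpha> \<le> u w - u x" if "w \<notin> \<Omega>" for w
  proof -
    have "ereal r \<le> ereal ((u w - u x) / norm (w - x) powr \<alpha>)"
      unfolding real[symmetric] using that by (intro INF_lower) simp
    moreover have "0 < norm (w - x) powr \<alpha>" using that assms(7) by auto
    ultimately show ?thesis by (simp add: le_divide_eq)
  qed
  then have cone: "r * norm (w - x) powr \<alpha> \<le> u w - u x" for w
    using visc_super_above_power_cone[OF assms \<open>r \<le> 0\<close>] by blast
  show ?thesis
    unfolding Lminus_def real
  proof (rule INF_greatest)
    fix w assume "w \<in> UNIV - {x}"
    then have "0 < norm (x - w) powr \<alpha>" by simp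
    then show "ereal r \<le> ereal ((u w - u x) / norm (x - w) powr \<alpha>)"
      using cone[of w] by (simp add: le_divide_eq norm_minus_commute)
  qed
next
  case PInf
  then show ?thesis using INF_quotient_complement_nonpos[OF assms(2,4,6), of x] by simp
qed simp

theorem mainTheorem2:
  fixes \<alpha> :: real and \<Omega> :: "'a::euclidean_space set"
    and f u :: "'a \<Rightarrow> real"
  assumes "0 < \<alpha>" "\<alpha> \<le> 1"
    and "open \<Omega>" "connected \<Omega>" "\<Omega> \<noteq> {}" "bounded \<Omega>"
    and "continuous_on \<Omega> f" "bounded (f ` \<Omega>)" "\<forall>x\<in>\<Omega>. f x \<le> 0"
    and "bounded (range u)"
    and "visc_super \<alpha> \<Omega> f u"
  shows "\<forall>x\<in>\<Omega>. Lminus \<alpha> u x =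
           (INF y\<in>UNIV - \<Omega>. ereal ((u y - u x) / norm (y - x) powr \<alpha>))"
proof
  fix x assume "x \<in> \<Omega>"
  show "Lminus \<alpha> u x = (INF y\<in>UNIV - \<Omega>. ereal ((u y - u x) / norm (y - x) powr \<alpha>))"
  proof (rule antisym)
    show "Lminus \<alpha> u x \<le> (INF y\<in>UNIV - \<Omega>. ereal ((u y - u x) / norm (y - x) powr \<alpha>))"
      using \<open>x \<in> \<Omega>\<close> by (rule Lminus_le_INF_complement)
    show "(INF y\<in>UNIV - \<Omega>. ereal ((u y - u x) / norm (y - x) powr \<alpha>)) \<le> Lminus \<alpha> u x"
      using assms(9) by (intro INF_complement_le_Lminus[OF assms(11,1,2,6) _ assms(10) \<open>x \<in> \<Omega>\<close>]) blast
  qed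
qed

end
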